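(* Let $a,b\in\mathbb{Q}_3$ with $\gamma(a)=2$, $\gamma(b)=0$ and $(b_0,b_1)=(1,0)$ or $(2,2)$. Then $x=\sum_{k\ge0}x_k3^k\in\mathbb{Z}_3^*$ is a solution of $x^3+ax=b$ if and only if the congruences $$x_0^3\equiv b_0\pmod3,\qquad x_0^3\equiv b_0+3b_1\pmod 9,$$ $$x_0^2x_1+x_0a_0+M_1(x_0)\equiv b_2\pmod3,$$ $$x_0^2x_2+P_3^2(x_0,x_1)+x_1a_0+x_0a_1+x_0x_1^2+M_2(x_0,x_1)\equiv b_3\pmod3,$$ $$x_0^2x_{k-1}+P_k^{k-1}(x_0,\dots,x_{k-2})+2x_0x_1x_{k-2}+x_{k-2}a_0+x_{k-3}a_1+\dots+x_0a_{k-2}+M_{k-1}(x_0,\dots,x_{k-2})\equiv b_k\pmod3,\quad k\ge4,$$ are fulfilled, where the integers $M_k(x_0,\dots,x_{k-1})$ are defined by $$x_0^3=b_0+3b_1+9M_1(x_0),$$ $$x_0^2x_1+x_0a_0=b_2-M_1(x_0)+3M_2(x_0,x_1),$$ $$x_0^2x_2+P_3^2(x_0,x_1)+x_1a_0+x_0a_1+x_0x_1^2=b_3-M_2(x_0,x_1)+3M_3(x_0,x_1,x_2),$$ $$x_0^2x_{k-1}+P_k^{k-1}(x_0,\dots,x_{k-2})+2x_0x_1x_{k-2}+x_{k-2}a_0+\dots+x_0a_{k-2}=b_k-M_{k-1}(x_0,\dots,x_{k-2})+3M_k(x_0,\dots,x_{k-1}),\quad k\ge4.$$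
   Context: Write $a=3^{\gamma(a)}(a_0+a_13+a_23^2+\dots)$, $b=3^{\gamma(b)}(b_0+b_13+b_23^2+\dots)$ in canonical form, with digits $a_j,b_j\in\{0,1,2\}$, $a_0,b_0\ne0$, $\gamma(a),\gamma(b)\in\mathbb{Z}$. $\mathbb{Z}_3^*$ is the set of $3$-adic units; $x\in\mathbb{Z}_3^*$ is written $x=x_0+x_13+x_23^2+\dots$ with $x_j\in\{0,1,2\}$, $x_0\ne0$. For $j\le k$, $$P_k^j(x_0,\dots,x_{j-1})=\sum\frac{6}{m_0!m_1!\cdots m_{j-1}!}x_0^{m_0}x_1^{m_1}\cdots x_{j-1}^{m_{j-1}},$$ the sum over nonnegative integers $m_0,\dots,m_{j-1}$ with $\sum_{i=0}^{j-1}m_i=3$ and $\sum_{i=1}^{j-1}im_i=k$. *)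

theory Defs
  imports "HOL-Number_Theory.Cong"
begin

text \<open>Elements of \<open>Z_3\<close> are represented by their canonical digit sequences
  \<open>d :: nat \<Rightarrow> int\<close> with digits in {0,1,2}; the element is \<open>\<Sum>j. d j * 3^j\<close>.\<close>

definition dig3 :: "(nat \<Rightarrow> int) \<Rightarrow> bool" where
  "dig3 d \<longleftrightarrow> (\<forall>j. d j \<in> {0, 1, 2})"

definition trunc3 :: "(nat \<Rightarrow> int) \<Rightarrow> nat \<Rightarrow> int" where
  "trunc3 d n = (\<Sum>j<n. d j * 3 ^ j)"

text \<open>With \<open>a = 3^2 (a_0 + a_1 3 + ...)\<close>, \<open>b = b_0 + b_1 3 + ...\<close>, \<open>x = x_0 + x_1 3 + ...\<close>,
  the 3-adic equation \<open>x^3 + a x = b\<close> holds iff it holds modulo every \<open>3^n\<close>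
  (\<open>Z_3 = lim Z/3^n Z\<close>); modulo \<open>3^n\<close> each element agrees with its truncation.\<close>
definition cubic_sol3 :: "(nat \<Rightarrow> int) \<Rightarrow> (nat \<Rightarrow> int) \<Rightarrow> (nat \<Rightarrow> int) \<Rightarrow> bool" where
  "cubic_sol3 a b x \<longleftrightarrow>
     (\<forall>n. [(trunc3 x n) ^ 3 + 9 * trunc3 a n * trunc3 x n = trunc3 b n] (mod 3 ^ n))"

text \<open>\<open>P_k^j(x_0,...,x_{j-1}) = \<Sum> 6/(m_0!...m_{j-1}!) x_0^{m_0}...x_{j-1}^{m_{j-1}}\<close>,
  over \<open>m_0+...+m_{j-1} = 3\<close>, \<open>\<Sum> i m_i = k\<close> (the quotient is an integer).\<close>
definition P3 :: "nat \<Rightarrow> nat \<Rightarrow> (nat \<Rightarrow> int) \<Rightarrow> int" where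
  "P3 k j x = (\<Sum>m \<in> {m :: nat \<Rightarrow> nat. (\<forall>i. j \<le> i \<longrightarrow> m i = 0) \<and>
                          (\<Sum>i<j. m i) = 3 \<and> (\<Sum>i = 1..<j. i * m i) = k}.
       ((6::int) div (\<Prod>i<j. fact (m i))) * (\<Prod>i<j. x i ^ m i))"

definition Lterm :: "(nat \<Rightarrow> int) \<Rightarrow> (nat \<Rightarrow> int) \<Rightarrow> nat \<Rightarrow> int" where
  "Lterm a x k =
    (if k = 2 then x 0 ^ 2 * x 1 + x 0 * a 0
     else if k = 3 then x 0 ^ 2 * x 2 + P3 3 2 x + x 1 * a 0 + x 0 * a 1 + x 0 * x 1 ^ 2
     else x 0 ^ 2 * x (k - 1) + P3 k (k - 1) x + 2 * x 0 * x 1 * x (k - 2)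
          + (\<Sum>i\<le>k - 2. x i * a (k - 2 - i)))"

text \<open>They are integers exactly when the preceding
  congruences hold; otherwise floor division is used (irrelevant for the statement).\<close>
fun Mseq :: "(nat \<Rightarrow> int) \<Rightarrow> (nat \<Rightarrow> int) \<Rightarrow> (nat \<Rightarrow> int) \<Rightarrow> nat \<Rightarrow> int" where
  "Mseq a b x 0 = 0"
| "Mseq a b x (Suc 0) = (x 0 ^ 3 - b 0 - 3 * b 1) div 9"
| "Mseq a b x (Suc (Suc k)) =
     (Lterm a x (Suc (Suc k)) + Mseq a b x (Suc k) - b (Suc (Suc k))) div 3"

end

theory Submission
  imports Defs "HOL-Computational_Algebra.Polynomial" "HOL-Combinatorics.Multiset_Permutations"
begin

text \<open>Let \<open>X(T)\<close>, \<open>A(T)\<close> be the polynomials whose coefficients are the digits of \<open>x\<close> and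
  \<open>a/9\<close>. Modulo \<open>3^n\<close>, \<open>x^3 + a x\<close> is the value at \<open>T = 3\<close> of \<open>X^3 + T^2 A X\<close> truncated below
  degree \<open>n\<close>. By the multinomial expansion of the cube, the coefficient of \<open>T^k\<close> is
  \<open>L_k - E_{k-1} + 3 E_k\<close> with \<open>L_k\<close> the left-hand side of the \<open>k\<close>-th congruence (\<open>P_k^{k-1}\<close>
  collects the products of three lower digits); telescoping the carries \<open>E_k\<close> gives
  \<open>x^3 + a x \<equiv> x_0^3 + \<Sum>_{2\<le>k<n} 3^k L_k (mod 3^n)\<close>. Comparing with the digits of \<open>b\<close> one
  level at a time, the remainder after \<open>n\<close> digits is exactly \<open>3^n M_{n-1}\<close>, so the equation
  holds modulo \<open>3^{n+1}\<close> iff \<open>L_n + M_{n-1} \<equiv> b_n (mod 3)\<close>.\<close>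

lemma power_sum_eq_sum_lists:
  fixes f :: "'a \<Rightarrow> 'b::comm_semiring_1"
  assumes "finite A"
  shows "(\<Sum>i\<in>A. f i) ^ n = (\<Sum>xs | set xs \<subseteq> A \<and> length xs = n. prod_list (map f xs))"
proof (induction n)
  case 0
  have "{xs. set xs \<subseteq> A \<and> length xs = 0} = {[]}" by auto
  then show ?case by simp
next
  case (Suc n)
  let ?L = "\<lambda>n. {xs. set xs \<subseteq> A \<and> length xs = n}"
  have L_Suc: "?L (Suc n) = (\<lambda>(a, xs). a # xs) ` (A \<times> ?L n)"
    by (auto simp: image_iff length_Suc_conv)
  have inj: "inj_on (\<lambda>(a, xs). a # xs) (A \<times> ?L n)"
    by (auto simp: inj_on_def)
  have "(\<Sum>xs \<in> ?L (Suc n). prod_list (map f xs))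
      = (\<Sum>(a, xs) \<in> A \<times> ?L n. f a * prod_list (map f xs))"
    unfolding L_Suc by (subst sum.reindex[OF inj]) (simp add: case_prod_unfold)
  also have "\<dots> = (\<Sum>i\<in>A. f i) * (\<Sum>xs \<in> ?L n. prod_list (map f xs))"
    by (simp add: sum.cartesian_product[symmetric] sum_product)
  finally show ?case using Suc by simp
qed

lemma coeff_power_sum_monom:
  fixes x :: "nat \<Rightarrow> 'a::comm_semiring_1"
  shows "coeff ((\<Sum>i<j. monom (x i) i) ^ n) k
       = (\<Sum>xs | set xs \<subseteq> {..<j} \<and> length xs = n \<and> sum_list xs = k. prod_list (map x xs))"
proof -
  have prod_list_monom: "prod_list (map (\<lambda>i. monom (x i) i) xs) = monom (prod_list (map x xs)) (sum_list xs)"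
    for xs by (induction xs) (auto simp: mult_monom monom_0 one_pCons)
  have fin: "finite {xs. set xs \<subseteq> {..<j} \<and> length xs = n}"
    by (rule finite_lists_length_eq) simp
  have "coeff ((\<Sum>i<j. monom (x i) i) ^ n) k
      = (\<Sum>xs | set xs \<subseteq> {..<j} \<and> length xs = n. if sum_list xs = k then prod_list (map x xs) else 0)"
    by (simp add: power_sum_eq_sum_lists coeff_sum prod_list_monom coeff_monom eq_commute)
  also have "\<dots> = (\<Sum>xs | set xs \<subseteq> {..<j} \<and> length xs = n \<and> sum_list xs = k. prod_list (map x xs))"
    by (simp add: sum.inter_filter[OF fin, symmetric] conj_assoc)
  finally show ?thesis .
qed

lemma sum_lists_by_mset:
  fixes g :: "'a multiset \<Rightarrow> 'b::comm_semiring_1"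
  assumes "finite \<M>"
  shows "(\<Sum>xs | mset xs \<in> \<M>. g (mset xs))
       = (\<Sum>M\<in>\<M>. of_nat (card (permutations_of_multiset M)) * g M)"
proof -
  have "{xs. mset xs \<in> \<M>} = (\<Union>M\<in>\<M>. permutations_of_multiset M)"
    by (auto simp: permutations_of_multiset_def)
  then have "(\<Sum>xs | mset xs \<in> \<M>. g (mset xs))
      = (\<Sum>M\<in>\<M>. \<Sum>xs\<in>permutations_of_multiset M. g (mset xs))"
    using assms by (simp only:) (rule sum.UNION_disjoint, auto dest: permutations_of_multisetD)
  also have "\<dots> = (\<Sum>M\<in>\<M>. of_nat (card (permutations_of_multiset M)) * g M)"
    by (simp add: permutations_of_multiset_def)
  finally show ?thesis .
qed

lemma sum_mset_image_eq_sum_count: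
  fixes f :: "'a \<Rightarrow> 'b::comm_semiring_1"
  assumes "finite A" "set_mset M \<subseteq> A"
  shows "sum_mset (image_mset f M) = (\<Sum>i\<in>A. f i * of_nat (count M i))"
  using assms(2)
proof (induction M)
  case (add y M)
  have "(\<Sum>i\<in>A. f i * of_nat (count (add_mset y M) i))
      = (\<Sum>i\<in>A. f i * of_nat (count M i) + (if i = y then f i else 0))"
    by (rule sum.cong) (auto simp: algebra_simps)
  then show ?case using add assms(1) by (simp add: sum.distrib add.commute)
qed simp

lemma prod_mset_image_eq_prod_count:
  fixes f :: "'a \<Rightarrow> 'b::comm_monoid_mult"
  assumes "finite A" "set_mset M \<subseteq> A"
  shows "prod_mset (image_mset f M) = (\<Prod>i\<in>A. f i ^ count M i)"
  using assms(2)
proof (induction M)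
  case (add y M)
  have "(\<Prod>i\<in>A. f i ^ count (add_mset y M) i)
      = (\<Prod>i\<in>A. f i ^ count M i * (if i = y then f i else 1))"
    by (rule prod.cong) (auto simp: algebra_simps)
  then show ?case using add assms(1) by (simp add: prod.distrib mult.commute)
qed simp

lemma bij_betw_count_multisets_exponents:
  "bij_betw count {M. set_mset M \<subseteq> {..<j} \<and> size M = s \<and> sum_mset M = k}
     {m. (\<forall>i. j \<le> i \<longrightarrow> m i = 0) \<and> (\<Sum>i<j. m i) = s \<and> (\<Sum>i = 1..<j. i * m i) = k}"
  (is "bij_betw count ?Ms ?Es")
proof -
  have size_sum: "size M = (\<Sum>i<j. count M i)"
    and weight_sum: "sum_mset M = (\<Sum>i = 1..<j. i * count M i)"
    if "set_mset M \<subseteq> {..<j}" for M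
  proof -
    show "size M = (\<Sum>i<j. count M i)"
      using sum_mset_image_eq_sum_count[OF _ that, of "\<lambda>_. 1::nat"] by simp
    have "sum_mset M = (\<Sum>i<j. i * count M i)"
      using sum_mset_image_eq_sum_count[OF _ that, of "\<lambda>i. i"] by simp
    also have "\<dots> = (\<Sum>i = 1..<j. i * count M i)"
      by (rule sum.mono_neutral_right) auto
    finally show "sum_mset M = (\<Sum>i = 1..<j. i * count M i)" .
  qed
  have support: "{i. 0 < m i} \<subseteq> {..<j}" if "\<forall>i. j \<le> i \<longrightarrow> m i = 0" for m :: "nat \<Rightarrow> nat"
  proof
    fix i assume "i \<in> {i. 0 < m i}"
    then have "\<not> j \<le> i" using that by auto
    then show "i \<in> {..<j}" by simp
  qed
  have count_Abs: "count (Abs_multiset m) = m" if "\<forall>i. j \<le> i \<longrightarrow> m i = 0" for m :: "nat \<Rightarrow> nat"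
    using count_Abs_multiset finite_subset[OF support[OF that]] by blast
  show ?thesis
  proof (rule bij_betw_byWitness[where f' = Abs_multiset])
    show "count ` ?Ms \<subseteq> ?Es"
      using size_sum weight_sum by (auto simp: count_eq_zero_iff)
    show "Abs_multiset ` ?Es \<subseteq> ?Ms"
    proof
      fix M assume "M \<in> Abs_multiset ` ?Es"
      then obtain m where m: "\<forall>i. j \<le> i \<longrightarrow> m i = 0" "(\<Sum>i<j. m i) = s" "(\<Sum>i = 1..<j. i * m i) = k"
        and M: "M = Abs_multiset m" by blast
      then have "count M = m" using count_Abs by simp
      moreover have "set_mset M \<subseteq> {..<j}"
        using support m(1) \<open>count M = m\<close> by (simp add: set_mset_def)
      ultimately show "M \<in> ?Ms"
        using m size_sum weight_sum by simp
    qed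
  qed (auto simp: count_Abs)
qed

definition digit_poly :: "(nat \<Rightarrow> int) \<Rightarrow> nat \<Rightarrow> int poly" where
  "digit_poly x n = (\<Sum>i<n. monom (x i) i)"

lemma P3_eq_coeff_digit_poly_cube: "P3 k j x = coeff (digit_poly x j ^ 3) k"
proof -
  define \<M> where "\<M> = {M. set_mset M \<subseteq> {..<j} \<and> size M = 3 \<and> sum_mset M = k}"
  define T where "T m = ((6::int) div (\<Prod>i<j. fact (m i))) * (\<Prod>i<j. x i ^ m i)"
    for m :: "nat \<Rightarrow> nat"
  have lists: "{xs. set xs \<subseteq> {..<j} \<and> length xs = 3 \<and> sum_list xs = k} = {xs. mset xs \<in> \<M>}"
    by (auto simp: \<M>_def sum_mset_sum_list)
  have "\<M> \<subseteq> mset ` {xs. set xs \<subseteq> {..<j} \<and> length xs = 3}"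
    by (auto simp: \<M>_def image_iff) (metis ex_mset set_mset_mset size_mset)
  then have fin: "finite \<M>"
    by (rule finite_subset) (intro finite_imageI finite_lists_length_eq, simp)
  have summand: "of_nat (card (permutations_of_multiset M)) * prod_mset (image_mset x M) = T (count M)"
    if "M \<in> \<M>" for M
  proof -
    have M: "set_mset M \<subseteq> {..<j}" "size M = 3" using that by (auto simp: \<M>_def)
    have "(\<Prod>i\<in>set_mset M. fact (count M i)) = (\<Prod>i<j. fact (count M i) :: nat)"
      by (rule prod.mono_neutral_left) (use M in \<open>auto simp: not_in_iff\<close>)
    then have "card (permutations_of_multiset M) = 6 div (\<Prod>i<j. fact (count M i))"
      using M by (simp add: card_permutations_of_multiset(1) fact_numeral)
    moreover have "prod_mset (image_mset x M) = (\<Prod>i<j. x i ^ count M i)"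
      by (rule prod_mset_image_eq_prod_count) (use M in auto)
    ultimately show ?thesis by (simp add: T_def zdiv_int of_nat_prod)
  qed
  have "coeff (digit_poly x j ^ 3) k = (\<Sum>xs | mset xs \<in> \<M>. prod_mset (image_mset x (mset xs)))"
    using prod_mset_prod_list[of "map x xs" for xs]
    by (simp add: digit_poly_def coeff_power_sum_monom lists)
  also have "\<dots> = (\<Sum>M\<in>\<M>. of_nat (card (permutations_of_multiset M)) * prod_mset (image_mset x M))"
    by (rule sum_lists_by_mset[OF fin])
  also have "\<dots> = (\<Sum>M\<in>\<M>. T (count M))"
    by (rule sum.cong) (simp_all add: summand)
  also have "\<dots> = P3 k j x"
    unfolding P3_def T_def \<M>_def by (rule sum.reindex_bij_betw[OF bij_betw_count_multisets_exponents])
  finally show ?thesis ..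
qed

lemma coeff_digit_poly: "coeff (digit_poly x n) i = (if i < n then x i else 0)"
  by (simp add: digit_poly_def coeff_sum coeff_monom)

lemma poly_digit_poly: "poly (digit_poly x n) 3 = trunc3 x n"
  by (simp add: digit_poly_def trunc3_def poly_sum poly_monom)

lemma coeff_cube_add_monom_dvd:
  fixes p d :: "'a::comm_ring_1 poly"
  assumes "monom 1 N dvd d" and "k < N"
  shows "coeff ((p + d) ^ 3) k = coeff (p ^ 3) k"
proof -
  have "(p + d) ^ 3 = p ^ 3 + d * (3 * p ^ 2 + 3 * p * d + d ^ 2)"
    by (simp add: power3_eq_cube power2_eq_square algebra_simps)
  moreover have "monom 1 N dvd d * (3 * p ^ 2 + 3 * p * d + d ^ 2)"
    using assms(1) by simp
  ultimately show ?thesis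
    using assms(2) by (simp add: monom_1_dvd_iff')
qed

lemma coeff_digit_poly_cube_truncate:
  assumes "k < n"
  shows "coeff (digit_poly x n ^ 3) k = coeff (digit_poly x (Suc k) ^ 3) k"
proof -
  have "digit_poly x n = digit_poly x (Suc k) + (\<Sum>i = Suc k..<n. monom (x i) i)"
    using assms unfolding digit_poly_def
    by (metis atLeast0LessThan sum.atLeastLessThan_concat zero_le Suc_leI)
  moreover have "monom 1 (Suc k) dvd (\<Sum>i = Suc k..<n. monom (x i) i)"
    by (auto simp: monom_1_dvd_iff' coeff_sum coeff_monom intro!: sum.neutral)
  ultimately show ?thesis
    using coeff_cube_add_monom_dvd by auto
qed

lemma coeff_digit_poly_cube_initial:
  "coeff (digit_poly x 1 ^ 3) 0 = x 0 ^ 3"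
  "coeff (digit_poly x 2 ^ 3) 1 = 3 * x 0 ^ 2 * x 1"
  "coeff (digit_poly x 3 ^ 3) 2 = 3 * x 0 ^ 2 * x 2 + 3 * x 0 * x 1 ^ 2"
  by (simp_all add: coeff_digit_poly coeff_0_power power3_eq_cube coeff_mult atMost_Suc
      numeral_3_eq_3 numeral_2_eq_2 algebra_simps power2_eq_square)

lemma coeff_digit_poly_cube_top:
  assumes "3 \<le> k"
  shows "coeff (digit_poly x (Suc k) ^ 3) k
       = P3 k (k - 1) x + 3 * x 0 ^ 2 * x k + 6 * x 0 * x 1 * x (k - 1)"
proof -
  define p where "p = digit_poly x (k - 1)"
  define u where "u = monom (x (k - 1)) (k - 1) + monom (x k) k"
  have split: "digit_poly x (Suc k) = p + u"
    using assms by (cases k) (simp_all add: p_def u_def digit_poly_def add.assoc)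
  have "monom 1 (k - 1) dvd u"
    by (simp add: u_def monom_1_dvd_iff' coeff_monom)
  then have "monom 1 (k - 1) * monom 1 (k - 1) dvd u * u * (3 * p + u)"
    by (intro dvd_mult2 mult_dvd_mono)
  then have high: "coeff (u * u * (3 * p + u)) k = 0"
    using assms by (simp add: mult_monom monom_1_dvd_iff')
  have "(p + u) ^ 3 = p ^ 3 + 3 * (p ^ 2 * u) + u * u * (3 * p + u)"
    by (simp add: power3_eq_cube power2_eq_square algebra_simps)
  then have "coeff ((p + u) ^ 3) k = coeff (p ^ 3) k + 3 * coeff (p ^ 2 * u) k"
    using high by (simp add: numeral_poly[where n="num.Bit1 num.One"])
  moreover have "coeff (p ^ 2 * u) k = x (k - 1) * coeff (p ^ 2) 1 + x k * coeff (p ^ 2) 0"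
  proof -
    have "p ^ 2 * u = monom (x (k - 1)) (k - 1) * p ^ 2 + monom (x k) k * p ^ 2"
      by (simp add: u_def algebra_simps)
    then show ?thesis using assms by (simp add: coeff_monom_mult)
  qed
  moreover have "coeff (p ^ 2) 0 = x 0 ^ 2" and "coeff (p ^ 2) 1 = 2 * x 0 * x 1"
    using assms by (simp_all add: p_def coeff_0_power coeff_digit_poly power2_eq_square coeff_mult atMost_Suc)
  ultimately show ?thesis
    by (simp add: split p_def P3_eq_coeff_digit_poly_cube algebra_simps power2_eq_square)
qed

lemma poly_cong_sum_coeff:
  fixes p :: "int poly"
  shows "[poly p m = (\<Sum>i<n. coeff p i * m ^ i)] (mod m ^ n)"
proof -
  define N where "N = max (degree p) n"
  have "poly p m = (\<Sum>i\<le>N. coeff p i * m ^ i)"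
    unfolding poly_altdef by (rule sum.mono_neutral_left) (auto simp: N_def coeff_eq_0)
  also have "{..N} = {..<n} \<union> {n..N}"
    by (auto simp: N_def)
  also have "(\<Sum>i\<in>{..<n} \<union> {n..N}. coeff p i * m ^ i)
      = (\<Sum>i<n. coeff p i * m ^ i) + (\<Sum>i = n..N. coeff p i * m ^ i)"
    by (rule sum.union_disjoint) auto
  finally have "poly p m = (\<Sum>i<n. coeff p i * m ^ i) + (\<Sum>i = n..N. coeff p i * m ^ i)" .
  moreover have "m ^ n dvd (\<Sum>i = n..N. coeff p i * m ^ i)"
    by (auto intro!: dvd_sum dvd_mult le_imp_power_dvd)
  ultimately show ?thesis
    by (simp add: cong_iff_dvd_diff)
qed

definition cubic_coeff :: "(nat \<Rightarrow> int) \<Rightarrow> (nat \<Rightarrow> int) \<Rightarrow> nat \<Rightarrow> int" where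
  "cubic_coeff a x k = coeff (digit_poly x (Suc k) ^ 3) k
     + (if 2 \<le> k then (\<Sum>i\<le>k - 2. x i * a (k - 2 - i)) else 0)"

lemma cubic_cong_sum_cubic_coeff:
  "[trunc3 x n ^ 3 + 9 * trunc3 a n * trunc3 x n = (\<Sum>k<n. 3 ^ k * cubic_coeff a x k)] (mod 3 ^ n)"
proof -
  define F where "F = digit_poly x n ^ 3 + monom 1 2 * (digit_poly x n * digit_poly a n)"
  have "poly F 3 = trunc3 x n ^ 3 + 9 * trunc3 a n * trunc3 x n"
    by (simp add: F_def poly_digit_poly poly_monom)
  moreover have "coeff F k = cubic_coeff a x k" if k: "k < n" for k
  proof -
    have "coeff (digit_poly x n * digit_poly a n) (k - 2) = (\<Sum>i\<le>k - 2. x i * a (k - 2 - i))"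
      unfolding coeff_mult by (rule sum.cong) (use k in \<open>auto simp: coeff_digit_poly\<close>)
    then have "coeff (monom 1 2 * (digit_poly x n * digit_poly a n)) k
        = (if 2 \<le> k then (\<Sum>i\<le>k - 2. x i * a (k - 2 - i)) else 0)"
      by (simp add: coeff_monom_mult)
    then show ?thesis
      using coeff_digit_poly_cube_truncate[OF k] by (simp add: F_def cubic_coeff_def)
  qed
  then have "(\<Sum>k<n. coeff F k * 3 ^ k) = (\<Sum>k<n. 3 ^ k * cubic_coeff a x k)"
    by (auto intro!: sum.cong)
  ultimately show ?thesis
    using poly_cong_sum_coeff[of F 3 n] by simp
qed

text \<open>Carrying the multiple \<open>3 E_k\<close> of the \<open>k\<close>-th coefficient into degree \<open>k + 1\<close> turns the
  coefficients into the left-hand sides \<open>Lterm\<close> of the paper's congruences.\<close>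
definition cube_carry :: "(nat \<Rightarrow> int) \<Rightarrow> nat \<Rightarrow> int" where
  "cube_carry x k =
    (if k = 0 then 0
     else if k = 1 then x 0 ^ 2 * x 1
     else if k = 2 then x 0 ^ 2 * x 2 + x 0 * x 1 ^ 2
     else x 0 ^ 2 * x k + 2 * x 0 * x 1 * x (k - 1))"

lemma cubic_coeff_eq_Lterm_carry:
  "cubic_coeff a x k =
     (if k = 0 then x 0 ^ 3 else if k = 1 then 0 else Lterm a x k - cube_carry x (k - 1))
     + 3 * cube_carry x k"
proof -
  consider "k = 0" | "k = 1" | "k = 2" | "k = 3" | "4 \<le> k" by linarith
  then show ?thesis
  proof cases
    case 1
    then show ?thesis
      using coeff_digit_poly_cube_initial(1) by (simp add: cubic_coeff_def cube_carry_def)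
  next
    case 2
    then show ?thesis
      using coeff_digit_poly_cube_initial(2)[of x]
      by (simp add: cubic_coeff_def cube_carry_def numeral_2_eq_2)
  next
    case 3
    then show ?thesis
      using coeff_digit_poly_cube_initial(3)
      by (simp add: cubic_coeff_def cube_carry_def Lterm_def numeral_3_eq_3 algebra_simps)
  next
    case 4
    then show ?thesis
      using coeff_digit_poly_cube_top[of 3 x]
      by (simp add: cubic_coeff_def cube_carry_def Lterm_def atMost_Suc algebra_simps)
  next
    case 5
    then have "k - 1 \<noteq> 2" "k - 1 \<noteq> 1" "k - 1 \<noteq> 0" "k - 1 - 1 = k - 2" by auto
    then show ?thesis
      using coeff_digit_poly_cube_top[of k x] 5
      by (simp add: cubic_coeff_def cube_carry_def Lterm_def algebra_simps)
  qed
qed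

definition Lterm_sum :: "(nat \<Rightarrow> int) \<Rightarrow> (nat \<Rightarrow> int) \<Rightarrow> nat \<Rightarrow> int" where
  "Lterm_sum a x n = x 0 ^ 3 + (\<Sum>k = 2..<n. 3 ^ k * Lterm a x k)"

lemma sum_cubic_coeff_eq_Lterm_sum:
  "(\<Sum>k<Suc n. 3 ^ k * cubic_coeff a x k) = Lterm_sum a x (Suc n) + 3 ^ Suc n * cube_carry x n"
proof (induction n)
  case 0
  then show ?case by (simp add: cubic_coeff_eq_Lterm_carry Lterm_sum_def cube_carry_def)
next
  case (Suc n)
  then show ?case
    by (cases "n = 0") (simp_all add: cubic_coeff_eq_Lterm_carry Lterm_sum_def cube_carry_def algebra_simps)
qed

lemma cubic_sol3_iff_Lterm_sum:
  "cubic_sol3 a b x \<longleftrightarrow> (\<forall>n\<ge>1. [Lterm_sum a x n = trunc3 b n] (mod 3 ^ n))"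
proof -
  have "[trunc3 x n ^ 3 + 9 * trunc3 a n * trunc3 x n = Lterm_sum a x n] (mod 3 ^ n)"
    if n1: "n \<ge> 1" for n
  proof -
    obtain m where n: "n = Suc m" using n1 by (cases n) auto
    have "[(\<Sum>k<n. 3 ^ k * cubic_coeff a x k) = Lterm_sum a x n] (mod 3 ^ n)"
      unfolding n sum_cubic_coeff_eq_Lterm_sum by (simp add: cong_iff_dvd_diff)
    then show ?thesis
      using cubic_cong_sum_cubic_coeff by (rule cong_trans[rotated])
  qed
  then have equiv: "[trunc3 x n ^ 3 + 9 * trunc3 a n * trunc3 x n = trunc3 b n] (mod 3 ^ n)
      \<longleftrightarrow> [Lterm_sum a x n = trunc3 b n] (mod 3 ^ n)" if "n \<ge> 1" for n
    using that by (meson cong_sym cong_trans)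
  show ?thesis
  proof
    assume "cubic_sol3 a b x"
    then show "\<forall>n\<ge>1. [Lterm_sum a x n = trunc3 b n] (mod 3 ^ n)"
      using equiv by (simp add: cubic_sol3_def)
  next
    assume sol: "\<forall>n\<ge>1. [Lterm_sum a x n = trunc3 b n] (mod 3 ^ n)"
    show "cubic_sol3 a b x"
      unfolding cubic_sol3_def
    proof
      fix n
      show "[trunc3 x n ^ 3 + 9 * trunc3 a n * trunc3 x n = trunc3 b n] (mod 3 ^ n)"
        using sol equiv[of n] by (cases "n = 0") auto
    qed
  qed
qed

lemma Lterm_sum_Suc_diff:
  assumes "2 \<le> n"
  shows "Lterm_sum a x (Suc n) - trunc3 b (Suc n)
       = Lterm_sum a x n - trunc3 b n + 3 ^ n * (Lterm a x n - b n)"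
  using assms by (simp add: Lterm_sum_def trunc3_def algebra_simps)

text \<open>Under the congruences below \<open>n\<close>, the divisions defining \<open>M_1, \<dots>, M_{n-1}\<close> are exact,
  so \<open>M_{n-1}\<close> is precisely the carry left over after matching the first \<open>n\<close> digits of \<open>b\<close>.\<close>
lemma Lterm_sum_diff_trunc3:
  assumes cong9: "[x 0 ^ 3 = b 0 + 3 * b 1] (mod 9)"
    and congs: "\<forall>k\<in>{2..<n}. [Lterm a x k + Mseq a b x (k - 1) = b k] (mod 3)"
    and "2 \<le> n"
  shows "Lterm_sum a x n - trunc3 b n = 3 ^ n * Mseq a b x (n - 1)"
  using \<open>2 \<le> n\<close> congs
proof (induction n rule: nat_induct_at_least)
  case base
  have "9 dvd x 0 ^ 3 - b 0 - 3 * b 1"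
    using cong9 by (simp add: cong_iff_dvd_diff algebra_simps)
  then show ?case
    by (simp add: Lterm_sum_def trunc3_def numeral_2_eq_2)
next
  case (Suc n)
  then obtain j where n: "n = Suc (Suc j)"
    by (metis add_2_eq_Suc le_iff_add add.commute)
  have "3 dvd Lterm a x n + Mseq a b x (n - 1) - b n"
    using Suc by (simp add: cong_iff_dvd_diff)
  moreover have "Mseq a b x n = (Lterm a x n + Mseq a b x (n - 1) - b n) div 3"
    by (simp add: n)
  ultimately have carry: "Lterm a x n + Mseq a b x (n - 1) - b n = 3 * Mseq a b x n"
    by (simp add: dvd_mult_div_cancel)
  have "Lterm_sum a x (Suc n) - trunc3 b (Suc n) = 3 ^ n * (Lterm a x n + Mseq a b x (n - 1) - b n)"
    using Suc by (simp add: Lterm_sum_Suc_diff algebra_simps)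
  also have "\<dots> = 3 ^ Suc n * Mseq a b x (Suc n - 1)"
    unfolding carry by simp
  finally show ?case .
qed

lemma Lterm_sum_cong_Suc_iff:
  assumes "[x 0 ^ 3 = b 0 + 3 * b 1] (mod 9)"
    and "\<forall>k\<in>{2..<n}. [Lterm a x k + Mseq a b x (k - 1) = b k] (mod 3)"
    and "2 \<le> n"
  shows "[Lterm_sum a x (Suc n) = trunc3 b (Suc n)] (mod 3 ^ Suc n)
     \<longleftrightarrow> [Lterm a x n + Mseq a b x (n - 1) = b n] (mod 3)"
proof -
  have "Lterm_sum a x (Suc n) - trunc3 b (Suc n) = 3 ^ n * (Lterm a x n + Mseq a b x (n - 1) - b n)"
    using Lterm_sum_diff_trunc3[OF assms] assms(3) by (simp add: Lterm_sum_Suc_diff algebra_simps)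
  then show ?thesis
    by (simp add: cong_iff_dvd_diff mult.commute[of _ "3 ^ n"])
qed

lemma Lterm_congs_if_Lterm_sum_congs:
  assumes sol: "\<forall>n\<ge>1. [Lterm_sum a x n = trunc3 b n] (mod 3 ^ n)"
    and cong9: "[x 0 ^ 3 = b 0 + 3 * b 1] (mod 9)"
  shows "\<forall>k\<ge>2. [Lterm a x k + Mseq a b x (k - 1) = b k] (mod 3)"
proof (intro allI impI)
  fix k :: nat assume "2 \<le> k"
  then show "[Lterm a x k + Mseq a b x (k - 1) = b k] (mod 3)"
  proof (induction k rule: less_induct)
    case (less k)
    then show ?case
      using sol cong9 Lterm_sum_cong_Suc_iff[of x b k a] by auto
  qed
qed

lemma Lterm_sum_congs_if_Lterm_congs:
  assumes "[x 0 ^ 3 = b 0] (mod 3)" and "[x 0 ^ 3 = b 0 + 3 * b 1] (mod 9)"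
    and "\<forall>k\<ge>2. [Lterm a x k + Mseq a b x (k - 1) = b k] (mod 3)"
  shows "\<forall>n\<ge>1. [Lterm_sum a x n = trunc3 b n] (mod 3 ^ n)"
proof (intro allI impI)
  fix n :: nat assume "1 \<le> n"
  then consider "n = 1" | "2 \<le> n" by linarith
  then show "[Lterm_sum a x n = trunc3 b n] (mod 3 ^ n)"
  proof cases
    case 1
    then show ?thesis using assms(1) by (simp add: Lterm_sum_def trunc3_def)
  next
    case 2
    then show ?thesis
      using assms Lterm_sum_diff_trunc3[of x b n a] by (simp add: cong_iff_dvd_diff)
  qed
qed

theorem theorem3p4:
  fixes a b x :: "nat \<Rightarrow> int"
  assumes "dig3 a" and "a 0 \<noteq> 0"
    and "dig3 b" and "b 0 \<noteq> 0"
    and "(b 0, b 1) = (1, 0) \<or> (b 0, b 1) = (2, 2)"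
    and "dig3 x" and "x 0 \<noteq> 0"
  shows "cubic_sol3 a b x \<longleftrightarrow>
    ([x 0 ^ 3 = b 0] (mod 3) \<and>
     [x 0 ^ 3 = b 0 + 3 * b 1] (mod 9) \<and>
     (\<forall>k\<ge>2. [Lterm a x k + Mseq a b x (k - 1) = b k] (mod 3)))"
proof -
  have first: "[Lterm_sum a x 1 = trunc3 b 1] (mod 3 ^ 1) \<longleftrightarrow> [x 0 ^ 3 = b 0] (mod 3)"
    by (simp add: Lterm_sum_def trunc3_def)
  have second: "[Lterm_sum a x 2 = trunc3 b 2] (mod 3 ^ 2) \<longleftrightarrow> [x 0 ^ 3 = b 0 + 3 * b 1] (mod 9)"
    by (simp add: Lterm_sum_def trunc3_def numeral_2_eq_2 ac_simps)
  show ?thesis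
    unfolding cubic_sol3_iff_Lterm_sum
  proof
    assume sol: "\<forall>n\<ge>1. [Lterm_sum a x n = trunc3 b n] (mod 3 ^ n)"
    then have "[x 0 ^ 3 = b 0] (mod 3)" and cong9: "[x 0 ^ 3 = b 0 + 3 * b 1] (mod 9)"
      using first second sol[rule_format, of 1] sol[rule_format, of 2] by simp_all
    with sol show "[x 0 ^ 3 = b 0] (mod 3) \<and> [x 0 ^ 3 = b 0 + 3 * b 1] (mod 9) \<and>
        (\<forall>k\<ge>2. [Lterm a x k + Mseq a b x (k - 1) = b k] (mod 3))"
      using Lterm_congs_if_Lterm_sum_congs by blast
  qed (use Lterm_sum_congs_if_Lterm_congs in blast)
qed

end
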